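(* Let $R_1,\dots,R_n$ ($n\ge2$) be i.i.d. nonnegative random variables with pdf $f_R$, and $\Theta_1,\dots,\Theta_n$ i.i.d. uniform on $[0,2\pi)$, independent of the $R_i$. Let $S_n=\sum_{i=1}^n R_i$ and $Z_n=\sqrt{\left(\sum_{i=1}^n R_i\cos\Theta_i\right)^2+\left(\sum_{i=1}^n R_i\sin\Theta_i\right)^2}$. Then the joint pdf of $(S_n,Z_n)$ is the $2(n-1)$-fold integral $$f_{S_n,Z_n}(s,z)=\frac{4z}{(2\pi)^n}\int\!\cdots\!\int_{\mathcal{R}}\frac{f_R(s-J_n)\prod_{i=1}^{n-1}f_R(x_i)}{\sqrt{\left(z^2-(s-J_n-K_n)^2\right)\left((s-J_n+K_n)^2-z^2\right)}}\,\mathrm{d}\boldsymbol{x}\,\mathrm{d}\boldsymbol{\xi},$$ where $\boldsymbol{x}=(x_1,\dots,x_{n-1})$, $\boldsymbol{\xi}=(\xi_1,\dots,\xi_{n-1})$, $J_n=\sum_{i=1}^{n-1}x_i$, $K_n=\sqrt{\sum_{i,j=1}^{n-1}x_ix_j\cos(\xi_i-\xi_j)}$, and $\mathcal{R}$ is the region where $0\le x_i<\infty$ and $0\le\xi_i<2\pi$ for $1\le i\le n-1$, and $|s-J_n-K_n|\le z\le s-J_n+K_n$. *)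

theory Defs
  imports "HOL-Probability.Probability"
begin

text \<open>The claimed joint density of (S_n, Z_n), as a 2(n-1)-fold (nonnegative)
  Lebesgue integral. Indices 1..n-1 of the paper are rendered as 0..n-2, i.e. {..<n-1}.\<close>

definition J_n :: "nat \<Rightarrow> (nat \<Rightarrow> real) \<Rightarrow> real" where
  "J_n n x = (\<Sum>i<n-1. x i)"

definition K_n :: "nat \<Rightarrow> (nat \<Rightarrow> real) \<Rightarrow> (nat \<Rightarrow> real) \<Rightarrow> real" where
  "K_n n x \<xi> = sqrt (\<Sum>i<n-1. \<Sum>j<n-1. x i * x j * cos (\<xi> i - \<xi> j))"

definition region :: "nat \<Rightarrow> real \<Rightarrow> real \<Rightarrow> (nat \<Rightarrow> real) \<Rightarrow> (nat \<Rightarrow> real) \<Rightarrow> bool" where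
  "region n s z x \<xi> \<longleftrightarrow>
     (\<forall>i<n-1. 0 \<le> x i \<and> 0 \<le> \<xi> i \<and> \<xi> i < 2*pi) \<and>
     \<bar>s - J_n n x - K_n n x \<xi>\<bar> \<le> z \<and> z \<le> s - J_n n x + K_n n x \<xi>"

definition joint_density :: "(real \<Rightarrow> real) \<Rightarrow> nat \<Rightarrow> real \<times> real \<Rightarrow> ennreal" where
  "joint_density f n = (\<lambda>(s, z).
     ennreal (4 * z / (2*pi)^n) *
     (\<integral>\<^sup>+ x. \<integral>\<^sup>+ \<xi>.
        indicator {(x, \<xi>). region n s z x \<xi>} (x, \<xi>) *
        ennreal (f (s - J_n n x) * (\<Prod>i<n-1. f (x i)) /
          sqrt ((z\<^sup>2 - (s - J_n n x - K_n n x \<xi>)\<^sup>2) * ((s - J_n n x + K_n n x \<xi>)\<^sup>2 - z\<^sup>2)))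
      \<partial>(PiM {..<n-1} (\<lambda>_. lborel)) \<partial>(PiM {..<n-1} (\<lambda>_. lborel))))"

end

theory Submission
  imports Defs
begin

text \<open>
  Condition on the first n - 1 steps of the planar walk with steps R_i e^(i Theta_i): if they have
  total length J and end at a point c with |c| = K, the last step moves S_n to J + R_n and Z_n to
  |c + R_n e^(i Theta_n)|. For a fixed radius r and a uniform angle, the distance |c + r e^(i Theta)|
  has density 2z / (pi sqrt((z^2 - (r-K)^2)((r+K)^2 - z^2))) on [|r-K|, r+K]; this is the
  substitution z^2 = K^2 + r^2 - 2Kr cos t of the law of cosines on a half period. Hence, given the
  first n - 1 steps, (S_n, Z_n) has density f(s - J) times this kernel, and the factor 4z/(2 pi)^n
  of the claimed density is (2 pi)^(1-n) for the first n - 1 angles times the 2z/pi of the kernel.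
  Integrating over the first n - 1 radii and angles (K vanishes only on a null set) turns both
  E h(S_n, Z_n) and the integral of h against the claimed density into the same iterated integral,
  for every measurable h >= 0.
\<close>

section \<open>Integrals over the line and the circle\<close>

lemma nn_integral_lborel_shift:
  fixes g :: "real \<Rightarrow> ennreal"
  assumes [measurable]: "g \<in> borel_measurable borel"
  shows "(\<integral>\<^sup>+x. g x \<partial>lborel) = (\<integral>\<^sup>+x. g (t + x) \<partial>lborel)"
  using nn_integral_real_affine[where c=1 and t=t and f=g] by simp

lemma nn_integral_lborel_reflect:
  fixes g :: "real \<Rightarrow> ennreal"
  assumes [measurable]: "g \<in> borel_measurable borel"
  shows "(\<integral>\<^sup>+x. g x \<partial>lborel) = (\<integral>\<^sup>+x. g (t - x) \<partial>lborel)"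
  using nn_integral_real_affine[where c="-1" and t=t and f=g] by simp

lemma nn_integral_indicator_split:
  fixes P :: "real \<Rightarrow> ennreal"
  assumes [measurable]: "P \<in> borel_measurable borel" and "a \<le> b" "b \<le> c"
  shows "(\<integral>\<^sup>+t. P t * indicator {a..<c} t \<partial>lborel)
       = (\<integral>\<^sup>+t. P t * indicator {a..<b} t \<partial>lborel) + (\<integral>\<^sup>+t. P t * indicator {b..<c} t \<partial>lborel)"
proof -
  have split: "indicator {a..<c} t = (indicator {a..<b} t + indicator {b..<c} t :: ennreal)" for t
    using assms(2,3) by (auto simp: indicator_def)
  show ?thesis
    unfolding split distrib_left by (rule nn_integral_add) auto
qed

lemma nn_integral_periodic_shift:
  fixes P :: "real \<Rightarrow> ennreal"
  assumes [measurable]: "P \<in> borel_measurable borel"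
    and periodic: "\<And>t. P (t - 2*pi) = P t" and \<alpha>: "0 \<le> \<alpha>" "\<alpha> < 2*pi"
  shows "(\<integral>\<^sup>+t. P (t - \<alpha>) * indicator {0..<2*pi} t \<partial>lborel) = (\<integral>\<^sup>+t. P t * indicator {0..<2*pi} t \<partial>lborel)"
proof -
  have "(\<integral>\<^sup>+t. P (t - \<alpha>) * indicator {0..<2*pi} t \<partial>lborel)
      = (\<integral>\<^sup>+t. P (t - \<alpha>) * indicator {0..<\<alpha>} t \<partial>lborel) + (\<integral>\<^sup>+t. P (t - \<alpha>) * indicator {\<alpha>..<2*pi} t \<partial>lborel)"
    using \<alpha> by (intro nn_integral_indicator_split) auto
  also have "(\<integral>\<^sup>+t. P (t - \<alpha>) * indicator {0..<\<alpha>} t \<partial>lborel) = (\<integral>\<^sup>+t. P t * indicator {2*pi-\<alpha>..<2*pi} t \<partial>lborel)"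
    by (subst nn_integral_lborel_shift[where t="\<alpha> - 2*pi"])
      (use periodic in \<open>auto intro!: nn_integral_cong simp: indicator_def algebra_simps\<close>)
  also have "(\<integral>\<^sup>+t. P (t - \<alpha>) * indicator {\<alpha>..<2*pi} t \<partial>lborel) = (\<integral>\<^sup>+t. P t * indicator {0..<2*pi-\<alpha>} t \<partial>lborel)"
    by (subst nn_integral_lborel_shift[where t=\<alpha>]) (auto intro!: nn_integral_cong simp: indicator_def algebra_simps)
  also have "(\<integral>\<^sup>+t. P t * indicator {2*pi-\<alpha>..<2*pi} t \<partial>lborel) + \<dots> = (\<integral>\<^sup>+t. P t * indicator {0..<2*pi} t \<partial>lborel)"
    using \<alpha> by (subst add.commute, intro nn_integral_indicator_split[symmetric]) auto
  finally show ?thesis .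
qed

lemma nn_integral_symmetric_period:
  fixes P :: "real \<Rightarrow> ennreal"
  assumes [measurable]: "P \<in> borel_measurable borel" and symmetric: "\<And>t. P (2*pi - t) = P t"
  shows "(\<integral>\<^sup>+t. P t * indicator {0..<2*pi} t \<partial>lborel) = 2 * (\<integral>\<^sup>+t. P t * indicator {0..pi} t \<partial>lborel)"
proof -
  have "(\<integral>\<^sup>+t. P t * indicator {0..<2*pi} t \<partial>lborel)
      = (\<integral>\<^sup>+t. P t * indicator {0..<pi} t \<partial>lborel) + (\<integral>\<^sup>+t. P t * indicator {pi..<2*pi} t \<partial>lborel)"
    by (rule nn_integral_indicator_split) auto
  also have "(\<integral>\<^sup>+t. P t * indicator {pi..<2*pi} t \<partial>lborel) = (\<integral>\<^sup>+t. P t * indicator {0<..pi} t \<partial>lborel)"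
    by (subst nn_integral_lborel_reflect[where t="2*pi"]) (auto intro!: nn_integral_cong simp: indicator_def symmetric)
  also have "(\<integral>\<^sup>+t. P t * indicator {0<..pi} t \<partial>lborel) = (\<integral>\<^sup>+t. P t * indicator {0..pi} t \<partial>lborel)"
    by (rule nn_integral_cong_AE)
      (use AE_lborel_singleton[of 0] in \<open>eventually_elim, auto simp: indicator_def\<close>)
  also have "(\<integral>\<^sup>+t. P t * indicator {0..<pi} t \<partial>lborel) = (\<integral>\<^sup>+t. P t * indicator {0..pi} t \<partial>lborel)"
    by (rule nn_integral_cong_AE)
      (use AE_lborel_singleton[of pi] in \<open>eventually_elim, auto simp: indicator_def\<close>)
  finally show ?thesis by (simp only: mult_2)
qed

lemma law_of_cosines_discriminant:
  fixes K r t :: real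
  shows "((K\<^sup>2 + r\<^sup>2 - 2 * K * r * cos t) - (r - K)\<^sup>2) * ((r + K)\<^sup>2 - (K\<^sup>2 + r\<^sup>2 - 2 * K * r * cos t))
       = (2 * K * r * sin t)\<^sup>2"
proof -
  have "((K\<^sup>2 + r\<^sup>2 - 2 * K * r * cos t) - (r - K)\<^sup>2) * ((r + K)\<^sup>2 - (K\<^sup>2 + r\<^sup>2 - 2 * K * r * cos t))
      = 4 * K\<^sup>2 * r\<^sup>2 * (1 - (cos t)\<^sup>2)"
    by (simp add: power2_eq_square algebra_simps)
  then show ?thesis by (simp add: sin_squared_eq power_mult_distrib)
qed

lemma law_of_cosines_jacobian:
  fixes K r t :: real
  defines "z \<equiv> sqrt (K\<^sup>2 + r\<^sup>2 - 2 * K * r * cos t)"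
  assumes K: "K > 0" and r: "r > 0" and t: "t \<in> {0<..<pi}"
  shows "2 * z / sqrt ((z\<^sup>2 - (r - K)\<^sup>2) * ((r + K)\<^sup>2 - z\<^sup>2)) * (K * r * sin t / z) = 1"
proof -
  have sin_pos: "sin t > 0" using t sin_gt_zero by auto
  have "cos t < 1" using t cos_monotone_0_pi[of 0 t] by simp
  then have "K\<^sup>2 + r\<^sup>2 - 2 * K * r * cos t > (r - K)\<^sup>2"
    using K r by (simp add: power2_eq_square algebra_simps)
  then have "K\<^sup>2 + r\<^sup>2 - 2 * K * r * cos t > 0"
    by (rule order.strict_trans1[OF zero_le_power2])
  then have z_pos: "z > 0" and z_sq: "z\<^sup>2 = K\<^sup>2 + r\<^sup>2 - 2 * K * r * cos t"
    unfolding z_def by simp_all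
  have "sqrt ((z\<^sup>2 - (r - K)\<^sup>2) * ((r + K)\<^sup>2 - z\<^sup>2)) = 2 * K * r * sin t"
    using K r sin_pos by (simp add: z_sq law_of_cosines_discriminant)
  then show ?thesis using K r sin_pos z_pos by (simp add: field_simps)
qed

lemma law_of_cosines_pos:
  fixes K r t :: real
  assumes "K > 0" "r > 0" "r \<noteq> K"
  shows "K\<^sup>2 + r\<^sup>2 - 2 * K * r * cos t > 0"
proof -
  have "K\<^sup>2 + r\<^sup>2 - 2 * K * r * cos t = (r - K)\<^sup>2 + 2 * K * r * (1 - cos t)"
    by (simp add: power2_eq_square algebra_simps)
  moreover have "(r - K)\<^sup>2 > 0" using assms(3) by simp
  moreover have "2 * K * r * (1 - cos t) \<ge> 0" using assms(1,2) by simp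
  ultimately show ?thesis by linarith
qed

lemma nn_integral_law_of_cosines_substitution:
  fixes K r :: real and h :: "real \<Rightarrow> ennreal"
  assumes K: "K > 0" and r: "r > 0" and rK: "r \<noteq> K"
    and [measurable]: "h \<in> borel_measurable borel"
  shows "(\<integral>\<^sup>+t. h (sqrt (K\<^sup>2 + r\<^sup>2 - 2 * K * r * cos t)) * indicator {0..pi} t \<partial>lborel)
       = (\<integral>\<^sup>+z. h z * ennreal (2 * z / sqrt ((z\<^sup>2 - (r - K)\<^sup>2) * ((r + K)\<^sup>2 - z\<^sup>2)))
              * indicator {\<bar>r - K\<bar>..r + K} z \<partial>lborel)"
proof -
  define g where "g t = sqrt (K\<^sup>2 + r\<^sup>2 - 2 * K * r * cos t)" for t
  define g' where "g' t = K * r * sin t / g t" for t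
  define F where "F z = h z * ennreal (2 * z / sqrt ((z\<^sup>2 - (r - K)\<^sup>2) * ((r + K)\<^sup>2 - z\<^sup>2)))" for z
  note q_pos = law_of_cosines_pos[OF K r rK]
  then have g_pos: "g t > 0" for t by (simp add: g_def)
  have g_deriv: "(g has_real_derivative g' t) (at t)" for t
    unfolding g_def g'_def using q_pos[of t]
    by (auto intro!: derivative_eq_intros simp: field_simps)
  then have "continuous_on UNIV g"
    by (meson DERIV_isCont continuous_at_imp_continuous_on)
  then have "continuous_on {0..pi} g'"
    unfolding g'_def using g_pos
    by (auto intro!: continuous_intros continuous_on_subset[of UNIV g] simp: less_imp_neq[symmetric])
  moreover have g'_nonneg: "0 \<le> g' t" if "t \<in> {0..pi}" for t
    using that g_pos[of t] K r sin_ge_zero[of t] by (simp add: g'_def)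
  moreover have "F \<in> borel_measurable borel" unfolding F_def by measurable
  ultimately have "(\<integral>\<^sup>+z. F z * indicator {g 0..g pi} z \<partial>lborel)
      = (\<integral>\<^sup>+t. F (g t) * ennreal (g' t) * indicator {0..pi} t \<partial>lborel)"
    using g_deriv by (intro nn_integral_substitution_aux) (auto simp: pi_gt_zero)
  also have "\<dots> = (\<integral>\<^sup>+t. h (g t) * indicator {0..pi} t \<partial>lborel)"
  proof (rule nn_integral_cong_AE)
    have jacobian: "F (g t) * ennreal (g' t) = h (g t)" if "t \<in> {0<..<pi}" for t
    proof -
      have "ennreal (2 * g t / sqrt (((g t)\<^sup>2 - (r - K)\<^sup>2) * ((r + K)\<^sup>2 - (g t)\<^sup>2))) * ennreal (g' t)
          = ennreal (2 * g t / sqrt (((g t)\<^sup>2 - (r - K)\<^sup>2) * ((r + K)\<^sup>2 - (g t)\<^sup>2)) * g' t)"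
        using g'_nonneg[of t] that by (intro ennreal_mult''[symmetric]) auto
      also have "\<dots> = 1"
        using law_of_cosines_jacobian[OF K r that] by (simp add: g_def g'_def)
      finally show ?thesis by (simp add: F_def mult.assoc)
    qed
    show "AE t in lborel. F (g t) * ennreal (g' t) * indicator {0..pi} t = h (g t) * indicator {0..pi} t"
      using AE_lborel_singleton[of 0] AE_lborel_singleton[of pi]
      by eventually_elim (use jacobian in \<open>auto simp: indicator_def\<close>)
  qed
  finally have "(\<integral>\<^sup>+z. F z * indicator {g 0..g pi} z \<partial>lborel) = (\<integral>\<^sup>+t. h (g t) * indicator {0..pi} t \<partial>lborel)" .
  moreover have "g 0 = \<bar>r - K\<bar>"
    by (simp add: g_def power2_eq_square algebra_simps flip: real_sqrt_abs)
  moreover have "g pi = \<bar>r + K\<bar>"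
    by (simp add: g_def power2_eq_square algebra_simps flip: real_sqrt_abs)
  ultimately show ?thesis using K r by (simp add: F_def g_def)
qed

definition angle_density :: "real \<Rightarrow> real" where
  "angle_density \<phi> = indicator {0..<2*pi} \<phi> / (2*pi)"

lemma angle_density_nonneg: "0 \<le> angle_density \<phi>"
  by (simp add: angle_density_def)

lemma borel_measurable_angle_density[measurable]: "angle_density \<in> borel_measurable borel"
  unfolding angle_density_def by measurable

definition circle_distance_density :: "real \<Rightarrow> real \<Rightarrow> real \<Rightarrow> real" where
  "circle_distance_density K r z = 2 * z / (pi * sqrt ((z\<^sup>2 - (r - K)\<^sup>2) * ((r + K)\<^sup>2 - z\<^sup>2)))"

lemma nn_integral_circle_distance:
  fixes K r a b :: real and h :: "real \<Rightarrow> ennreal"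
  assumes K: "K > 0" and r: "r > 0" and rK: "r \<noteq> K" and ab: "a\<^sup>2 + b\<^sup>2 = K\<^sup>2"
    and [measurable]: "h \<in> borel_measurable borel"
  shows "(\<integral>\<^sup>+\<phi>. ennreal (angle_density \<phi>) * h (sqrt ((a + r * cos \<phi>)\<^sup>2 + (b + r * sin \<phi>)\<^sup>2)) \<partial>lborel)
       = (\<integral>\<^sup>+z. ennreal (circle_distance_density K r z) * indicator {\<bar>r - K\<bar>..r + K} z * h z \<partial>lborel)"
proof -
  have "(a/K)\<^sup>2 + (b/K)\<^sup>2 = 1" using ab K by (simp add: power_divide field_simps)
  then obtain \<alpha> where \<alpha>: "0 \<le> \<alpha>" "\<alpha> < 2*pi" "a/K = cos \<alpha>" "b/K = sin \<alpha>"
    by (rule sincos_total_2pi)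
  then have a: "a = K * cos \<alpha>" and b: "b = K * sin \<alpha>" using K by (auto simp: field_simps)
  define P where "P t = h (sqrt (K\<^sup>2 + r\<^sup>2 + 2 * K * r * cos t))" for t
  have [measurable]: "P \<in> borel_measurable borel" unfolding P_def by measurable
  have dist_eq: "(a + r * cos \<phi>)\<^sup>2 + (b + r * sin \<phi>)\<^sup>2 = K\<^sup>2 + r\<^sup>2 + 2 * K * r * cos (\<phi> - \<alpha>)" for \<phi>
    unfolding a b
    by (simp add: cos_diff power2_eq_square algebra_simps)
      (simp add: power2_eq_square[symmetric] sin_squared_eq algebra_simps)
  have angle_density_eq: "ennreal (angle_density \<phi>) = ennreal (1 / (2*pi)) * indicator {0..<2*pi} \<phi>" for \<phi>
    by (simp add: angle_density_def indicator_def)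
  have "(\<integral>\<^sup>+\<phi>. ennreal (angle_density \<phi>) * h (sqrt ((a + r * cos \<phi>)\<^sup>2 + (b + r * sin \<phi>)\<^sup>2)) \<partial>lborel)
      = ennreal (1 / (2*pi)) * (\<integral>\<^sup>+\<phi>. P (\<phi> - \<alpha>) * indicator {0..<2*pi} \<phi> \<partial>lborel)"
    unfolding angle_density_eq dist_eq P_def
    by (subst nn_integral_cmult[symmetric]) (auto simp: mult_ac)
  also have "(\<integral>\<^sup>+\<phi>. P (\<phi> - \<alpha>) * indicator {0..<2*pi} \<phi> \<partial>lborel) = 2 * (\<integral>\<^sup>+t. P t * indicator {0..pi} t \<partial>lborel)"
    by (subst nn_integral_periodic_shift[OF _ _ \<alpha>(1,2)], simp_all add: P_def cos_diff)
      (rule nn_integral_symmetric_period, simp_all add: P_def cos_diff)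
  also have "(\<integral>\<^sup>+t. P t * indicator {0..pi} t \<partial>lborel)
      = (\<integral>\<^sup>+t. h (sqrt (K\<^sup>2 + r\<^sup>2 - 2 * K * r * cos t)) * indicator {0..pi} t \<partial>lborel)"
    by (subst nn_integral_lborel_reflect[where t=pi]) (auto intro!: nn_integral_cong simp: indicator_def P_def)
  also have "\<dots> = (\<integral>\<^sup>+z. h z * ennreal (2 * z / sqrt ((z\<^sup>2 - (r - K)\<^sup>2) * ((r + K)\<^sup>2 - z\<^sup>2)))
                       * indicator {\<bar>r - K\<bar>..r + K} z \<partial>lborel)"
    using K r rK by (rule nn_integral_law_of_cosines_substitution) measurable
  also have "ennreal (1 / (2*pi)) * (2 * \<dots>)
      = (\<integral>\<^sup>+z. ennreal (1 / pi) * (h z * ennreal (2 * z / sqrt ((z\<^sup>2 - (r - K)\<^sup>2) * ((r + K)\<^sup>2 - z\<^sup>2)))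
                       * indicator {\<bar>r - K\<bar>..r + K} z) \<partial>lborel)"
    using ennreal_mult''[of 2 "1 / (2*pi)"] by (subst nn_integral_cmult) (auto simp: mult.assoc[symmetric])
  also have "\<dots> = (\<integral>\<^sup>+z. ennreal (circle_distance_density K r z) * indicator {\<bar>r - K\<bar>..r + K} z * h z \<partial>lborel)"
  proof (rule nn_integral_cong)
    fix z
    show "ennreal (1 / pi) * (h z * ennreal (2 * z / sqrt ((z\<^sup>2 - (r - K)\<^sup>2) * ((r + K)\<^sup>2 - z\<^sup>2)))
            * indicator {\<bar>r - K\<bar>..r + K} z)
        = ennreal (circle_distance_density K r z) * indicator {\<bar>r - K\<bar>..r + K} z * h z"
      by (auto simp: circle_distance_density_def indicator_def ennreal_mult'[symmetric] mult_ac)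
  qed
  finally show ?thesis .
qed

section \<open>Product measures\<close>

lemma sigma_finite_PiM_lborel: "finite I \<Longrightarrow> sigma_finite_measure (PiM I (\<lambda>_. lborel :: real measure))"
  using product_sigma_finite.sigma_finite[of "\<lambda>_. lborel" I]
  by (simp add: product_sigma_finite_def lborel.sigma_finite_measure_axioms)

lemma AE_PiM_lborel_coordinate:
  fixes P :: "(nat \<Rightarrow> real) \<Rightarrow> bool"
  assumes I: "finite I" "i \<in> I"
    and Pm[measurable]: "Measurable.pred (PiM I (\<lambda>_. lborel)) P"
    and AEt: "\<And>y. AE t in lborel. \<not> P (y(i := t))"
  shows "AE x in PiM I (\<lambda>_. lborel). \<not> P x"
proof -
  interpret product_sigma_finite "\<lambda>_. lborel :: real measure"
    by (simp add: product_sigma_finite_def lborel.sigma_finite_measure_axioms)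
  have Ieq: "I = insert i (I - {i})" using I by auto
  have "emeasure (PiM I (\<lambda>_. lborel)) {x \<in> space (PiM I (\<lambda>_. lborel)). P x}
      = (\<integral>\<^sup>+x. indicator {x \<in> space (PiM I (\<lambda>_. lborel)). P x} x \<partial>PiM I (\<lambda>_. lborel))"
    by (rule nn_integral_indicator[symmetric]) measurable
  also have "\<dots> = (\<integral>\<^sup>+x. (if P x then 1 else 0) \<partial>PiM I (\<lambda>_. lborel))"
    by (rule nn_integral_cong) (simp add: indicator_def)
  also have "\<dots> = (\<integral>\<^sup>+y. (\<integral>\<^sup>+t. (if P (y(i := t)) then 1 else 0) \<partial>lborel) \<partial>PiM (I - {i}) (\<lambda>_. lborel))"
    by (subst Ieq, subst product_nn_integral_insert) (use I in \<open>auto simp: insert_absorb intro!: measurable_If\<close>)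
  also have "\<dots> = (\<integral>\<^sup>+y. 0 \<partial>PiM (I - {i}) (\<lambda>_. lborel :: real measure))"
  proof (intro nn_integral_cong)
    fix y assume y: "y \<in> space (PiM (I - {i}) (\<lambda>_. lborel :: real measure))"
    have m: "(\<lambda>t. y(i := t)) \<in> lborel \<rightarrow>\<^sub>M PiM I (\<lambda>_. lborel)"
      using measurable_component_update[OF y, of i] I Ieq by auto
    show "(\<integral>\<^sup>+t. (if P (y(i := t)) then 1 else 0) \<partial>lborel) = 0"
      by (subst nn_integral_0_iff_AE) (use AEt[of y] m in \<open>auto elim!: eventually_mono intro!: measurable_If measurable_compose[OF m Pm]\<close>)
  qed
  finally have "emeasure (PiM I (\<lambda>_. lborel)) {x \<in> space (PiM I (\<lambda>_. lborel)). P x} = 0" by simp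
  then show ?thesis
    by (subst AE_iff_measurable[OF _ refl]) auto
qed

lemma nn_integral_rotate_outer_inward:
  fixes F :: "'a \<Rightarrow> 'b \<Rightarrow> 'c \<Rightarrow> ennreal"
  assumes M: "sigma_finite_measure M" and N: "sigma_finite_measure N" and L: "sigma_finite_measure L"
    and F: "(\<lambda>((p, x), y). F p x y) \<in> borel_measurable ((M \<Otimes>\<^sub>M N) \<Otimes>\<^sub>M L)"
  shows "(\<integral>\<^sup>+p. \<integral>\<^sup>+x. \<integral>\<^sup>+y. F p x y \<partial>L \<partial>N \<partial>M)
       = (\<integral>\<^sup>+x. \<integral>\<^sup>+y. \<integral>\<^sup>+p. F p x y \<partial>M \<partial>L \<partial>N)"
proof -
  interpret L: sigma_finite_measure L by (rule L)
  interpret MxN: pair_sigma_finite M N by (intro pair_sigma_finite.intro M N)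
  interpret MxL: pair_sigma_finite M L by (intro pair_sigma_finite.intro M L)
  have "(\<lambda>(p, x). \<integral>\<^sup>+y. F p x y \<partial>L) \<in> borel_measurable (M \<Otimes>\<^sub>M N)"
    using L.borel_measurable_nn_integral[of "\<lambda>px y. F (fst px) (snd px) y"] F by (simp add: split_beta')
  then have "(\<integral>\<^sup>+p. \<integral>\<^sup>+x. \<integral>\<^sup>+y. F p x y \<partial>L \<partial>N \<partial>M)
      = (\<integral>\<^sup>+x. \<integral>\<^sup>+p. \<integral>\<^sup>+y. F p x y \<partial>L \<partial>M \<partial>N)"
    by (rule MxN.Fubini'[symmetric])
  also have "\<dots> = (\<integral>\<^sup>+x. \<integral>\<^sup>+y. \<integral>\<^sup>+p. F p x y \<partial>M \<partial>L \<partial>N)"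
  proof (rule nn_integral_cong)
    fix x assume "x \<in> space N"
    then have "(\<lambda>(p, y). ((p, x), y)) \<in> M \<Otimes>\<^sub>M L \<rightarrow>\<^sub>M (M \<Otimes>\<^sub>M N) \<Otimes>\<^sub>M L" by measurable
    from measurable_compose[OF this F]
    show "(\<integral>\<^sup>+p. \<integral>\<^sup>+y. F p x y \<partial>L \<partial>M) = (\<integral>\<^sup>+y. \<integral>\<^sup>+p. F p x y \<partial>M \<partial>L)"
      by (intro MxL.Fubini'[symmetric]) (simp add: split_beta')
  qed
  finally show ?thesis .
qed

lemma nn_integral_nested_pair_measure:
  assumes B: "sigma_finite_measure B" and C: "sigma_finite_measure C" and D: "sigma_finite_measure D"
    and F: "F \<in> borel_measurable (A \<Otimes>\<^sub>M (B \<Otimes>\<^sub>M (C \<Otimes>\<^sub>M D)))"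
  shows "(\<integral>\<^sup>+w. F w \<partial>(A \<Otimes>\<^sub>M (B \<Otimes>\<^sub>M (C \<Otimes>\<^sub>M D))))
       = (\<integral>\<^sup>+a. \<integral>\<^sup>+b. \<integral>\<^sup>+c. \<integral>\<^sup>+d. F (a, b, c, d) \<partial>D \<partial>C \<partial>B \<partial>A)"
proof -
  interpret D: sigma_finite_measure D by (rule D)
  interpret CD: sigma_finite_measure "C \<Otimes>\<^sub>M D" by (rule sigma_finite_pair_measure[OF C D])
  interpret BCD: sigma_finite_measure "B \<Otimes>\<^sub>M (C \<Otimes>\<^sub>M D)"
    by (rule sigma_finite_pair_measure[OF B CD.sigma_finite_measure_axioms])
  have "(\<integral>\<^sup>+w. F w \<partial>(A \<Otimes>\<^sub>M (B \<Otimes>\<^sub>M (C \<Otimes>\<^sub>M D))))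
      = (\<integral>\<^sup>+a. \<integral>\<^sup>+v. F (a, v) \<partial>(B \<Otimes>\<^sub>M (C \<Otimes>\<^sub>M D)) \<partial>A)"
    using F by (rule BCD.nn_integral_fst[symmetric])
  also have "\<dots> = (\<integral>\<^sup>+a. \<integral>\<^sup>+b. \<integral>\<^sup>+u. F (a, b, u) \<partial>(C \<Otimes>\<^sub>M D) \<partial>B \<partial>A)"
    using measurable_Pair2[OF F] by (intro nn_integral_cong CD.nn_integral_fst[symmetric]) simp
  also have "\<dots> = (\<integral>\<^sup>+a. \<integral>\<^sup>+b. \<integral>\<^sup>+c. \<integral>\<^sup>+d. F (a, b, c, d) \<partial>D \<partial>C \<partial>B \<partial>A)"
    using measurable_Pair2[OF measurable_Pair2[OF F]]
    by (intro nn_integral_cong D.nn_integral_fst[symmetric]) simp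
  finally show ?thesis .
qed

lemma PiM_density:
  fixes g :: "'i \<Rightarrow> 'a \<Rightarrow> ennreal"
  assumes I: "finite I" and N: "sigma_finite_measure N"
    and g[measurable]: "\<And>i. g i \<in> borel_measurable N"
    and sf: "\<And>i. sigma_finite_measure (density N (g i))"
  shows "PiM I (\<lambda>i. density N (g i)) = density (PiM I (\<lambda>_. N)) (\<lambda>x. \<Prod>i\<in>I. g i (x i))"
proof -
  interpret PD: product_sigma_finite "\<lambda>i. density N (g i)"
    unfolding product_sigma_finite_def using sf by simp
  interpret PN: product_sigma_finite "\<lambda>_::'i. N"
    unfolding product_sigma_finite_def using N by simp
  have [measurable]: "(\<lambda>x. \<Prod>i\<in>I. g i (x i)) \<in> borel_measurable (PiM I (\<lambda>_. N))"
    by measurable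
  show ?thesis
  proof (rule PD.PiM_eqI[symmetric])
    show "sets (density (PiM I (\<lambda>_. N)) (\<lambda>x. \<Prod>i\<in>I. g i (x i))) = sets (PiM I (\<lambda>i. density N (g i)))"
      by (simp cong: sets_PiM_cong)
    fix A assume "\<And>i. i \<in> I \<Longrightarrow> A i \<in> sets (density N (g i))"
    then have A[measurable]: "\<And>i. i \<in> I \<Longrightarrow> A i \<in> sets N" by simp
    have "emeasure (density (PiM I (\<lambda>_. N)) (\<lambda>x. \<Prod>i\<in>I. g i (x i))) (PiE I A)
        = (\<integral>\<^sup>+x. (\<Prod>i\<in>I. g i (x i) * indicator (A i) (x i)) \<partial>PiM I (\<lambda>_. N))"
      using I by (subst emeasure_density)
        (auto intro!: sets_PiM_I_finite nn_integral_cong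
          simp: prod.distrib indicator_def space_PiM PiE_iff prod_zero_iff)
    also have "\<dots> = (\<Prod>i\<in>I. \<integral>\<^sup>+y. g i y * indicator (A i) y \<partial>N)"
      using I by (intro PN.product_nn_integral_prod) auto
    also have "\<dots> = (\<Prod>i\<in>I. emeasure (density N (g i)) (A i))"
      by (intro prod.cong refl) (simp add: emeasure_density)
    finally show "emeasure (density (PiM I (\<lambda>_. N)) (\<lambda>x. \<Prod>i\<in>I. g i (x i))) (PiE I A)
        = (\<Prod>i\<in>I. emeasure (density N (g i)) (A i))" .
  qed fact
qed

lemma distr_eq_density_nonneg_part:
  fixes X :: "'a \<Rightarrow> real" and f :: "real \<Rightarrow> real"
  assumes X: "distributed M lborel X (\<lambda>x. ennreal (f x))" and nonneg: "\<forall>\<omega>\<in>space M. 0 \<le> X \<omega>"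
    and [measurable]: "f \<in> borel_measurable borel"
  shows "distr M borel X = density lborel (\<lambda>x. ennreal (f x * indicator {0..} x))"
proof -
  have [measurable]: "X \<in> borel_measurable M"
    using distributed_measurable[OF X] by simp
  have "distr M borel X = density lborel (\<lambda>x. ennreal (f x))"
    using distributed_distr_eq_density[OF X] by (simp cong: distr_cong)
  also have "\<dots> = density lborel (\<lambda>x. ennreal (f x * indicator {0..} x))"
  proof (rule density_cong)
    have "emeasure (distr M lborel X) {..<0} = emeasure M (X -` {..<0} \<inter> space M)"
      by (rule emeasure_distr[OF distributed_measurable[OF X]]) simp
    then have "emeasure (density lborel (\<lambda>x. ennreal (f x))) {..<0} = emeasure M (X -` {..<0} \<inter> space M)"
      by (simp add: distributed_distr_eq_density[OF X])
    also have "X -` {..<0} \<inter> space M = {}" using nonneg by force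
    finally have "AE x in lborel. ennreal (f x) * indicator {..<0} x = 0"
      by (simp add: emeasure_density nn_integral_0_iff_AE)
    then show "AE x in lborel. ennreal (f x) = ennreal (f x * indicator {0..} x)"
      by (rule eventually_mono) (auto simp: indicator_def split: if_splits)
  qed simp_all
  finally show ?thesis .
qed

lemma distributedI_nn_integral_indicator:
  assumes X: "X \<in> M \<rightarrow>\<^sub>M N" and g: "g \<in> borel_measurable N"
    and eq: "\<And>A. A \<in> sets N \<Longrightarrow> (\<integral>\<^sup>+\<omega>. indicator A (X \<omega>) \<partial>M) = (\<integral>\<^sup>+y. g y * indicator A y \<partial>N)"
  shows "distributed M N X g"
  unfolding distributed_def
proof (intro conjI measure_eqI X g)
  fix A assume "A \<in> sets (distr M N X)"
  then have A: "A \<in> sets N" by simp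
  have "emeasure (distr M N X) A = (\<integral>\<^sup>+y. indicator A y \<partial>distr M N X)"
    using A by simp
  also have "\<dots> = (\<integral>\<^sup>+\<omega>. indicator A (X \<omega>) \<partial>M)"
    using A by (intro nn_integral_distr X) simp
  also have "\<dots> = emeasure (density N g) A"
    using A g by (simp add: eq emeasure_density)
  finally show "emeasure (distr M N X) A = emeasure (density N g) A" .
qed simp

definition assemble_steps :: "nat \<Rightarrow> (nat \<Rightarrow> 'a) \<times> (nat \<Rightarrow> 'a) \<times> 'a \<times> 'a \<Rightarrow> nat + nat \<Rightarrow> 'a" where
  "assemble_steps m = (\<lambda>(x, \<xi>, r, \<phi>). \<lambda>i\<in>Inl ` {..<Suc m} \<union> Inr ` {..<Suc m}.
     case i of Inl j \<Rightarrow> if j < m then x j else r | Inr j \<Rightarrow> if j < m then \<xi> j else \<phi>)"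

lemma measurable_assemble_steps:
  "assemble_steps m \<in> PiM {..<m} (\<lambda>_. N) \<Otimes>\<^sub>M (PiM {..<m} (\<lambda>_. N) \<Otimes>\<^sub>M (N \<Otimes>\<^sub>M N))
     \<rightarrow>\<^sub>M PiM (Inl ` {..<Suc m} \<union> Inr ` {..<Suc m}) (\<lambda>_. N)"
  unfolding assemble_steps_def split_beta'
  by (rule measurable_restrict) (auto simp: less_Suc_eq)

lemma vimage_assemble_steps_PiE:
  assumes A: "\<And>i. i \<in> Inl ` {..<Suc m} \<union> Inr ` {..<Suc m} \<Longrightarrow> A i \<in> sets N"
  shows "assemble_steps m -` PiE (Inl ` {..<Suc m} \<union> Inr ` {..<Suc m}) A
           \<inter> space (PiM {..<m} (\<lambda>_. N) \<Otimes>\<^sub>M (PiM {..<m} (\<lambda>_. N) \<Otimes>\<^sub>M (N \<Otimes>\<^sub>M N)))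
       = PiE {..<m} (\<lambda>j. A (Inl j)) \<times> (PiE {..<m} (\<lambda>j. A (Inr j)) \<times> (A (Inl m) \<times> A (Inr m)))"
    (is "_ -` PiE ?T A \<inter> space ?Q = _")
proof -
  have "PiE {..<m} (\<lambda>j. A (Inl j)) \<times> (PiE {..<m} (\<lambda>j. A (Inr j)) \<times> (A (Inl m) \<times> A (Inr m))) \<in> sets ?Q"
    using A by (auto intro!: pair_measureI sets_PiM_I_finite)
  note box_space = sets.sets_into_space[OF this]
  show ?thesis
  proof (intro equalityI subsetI)
    fix w assume w: "w \<in> assemble_steps m -` PiE ?T A \<inter> space ?Q"
    obtain x \<xi> r \<phi> where w_eq: "w = (x, \<xi>, r, \<phi>)" by (cases w) auto
    from w have ext: "x \<in> extensional {..<m}" "\<xi> \<in> extensional {..<m}"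
      by (auto simp: w_eq space_pair_measure space_PiM PiE_iff)
    from w have components: "assemble_steps m w (Inl j) \<in> A (Inl j) \<and> assemble_steps m w (Inr j) \<in> A (Inr j)"
      if "j \<le> m" for j
      using that by (auto simp: PiE_iff)
    have "x j \<in> A (Inl j)" "\<xi> j \<in> A (Inr j)" if "j < m" for j
      using components[of j] that by (simp_all add: w_eq assemble_steps_def)
    with ext have "x \<in> PiE {..<m} (\<lambda>j. A (Inl j))" "\<xi> \<in> PiE {..<m} (\<lambda>j. A (Inr j))"
      by (auto simp: PiE_iff)
    moreover have "r \<in> A (Inl m)" "\<phi> \<in> A (Inr m)"
      using components[of m] by (simp_all add: w_eq assemble_steps_def)
    ultimately show "w \<in> PiE {..<m} (\<lambda>j. A (Inl j)) \<times> (PiE {..<m} (\<lambda>j. A (Inr j)) \<times> (A (Inl m) \<times> A (Inr m)))"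
      by (simp add: w_eq)
  next
    fix w assume w: "w \<in> PiE {..<m} (\<lambda>j. A (Inl j)) \<times> (PiE {..<m} (\<lambda>j. A (Inr j)) \<times> (A (Inl m) \<times> A (Inr m)))"
    obtain x \<xi> r \<phi> where w_eq: "w = (x, \<xi>, r, \<phi>)" by (cases w) auto
    have "w \<in> space ?Q"
      using box_space w by (rule subsetD)
    moreover have "x j \<in> A (Inl j)" "\<xi> j \<in> A (Inr j)" if "j < m" for j
      using w that by (auto simp: w_eq PiE_iff)
    with w have "assemble_steps m w \<in> PiE ?T A"
      unfolding w_eq assemble_steps_def by (auto simp: restrict_PiE_iff less_Suc_eq)
    ultimately show "w \<in> assemble_steps m -` PiE ?T A \<inter> space ?Q" by simp
  qed
qed

lemma distr_assemble_steps:
  assumes N: "sigma_finite_measure N"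
  shows "distr (PiM {..<m} (\<lambda>_. N) \<Otimes>\<^sub>M (PiM {..<m} (\<lambda>_. N) \<Otimes>\<^sub>M (N \<Otimes>\<^sub>M N)))
       (PiM (Inl ` {..<Suc m} \<union> Inr ` {..<Suc m}) (\<lambda>_. N)) (assemble_steps m)
     = PiM (Inl ` {..<Suc m} \<union> Inr ` {..<Suc m}) (\<lambda>_. N)"
    (is "distr ?Q (PiM ?T _) _ = _")
proof -
  interpret N: sigma_finite_measure N by (rule N)
  interpret PN: product_sigma_finite "\<lambda>_::nat. N" unfolding product_sigma_finite_def using N by simp
  interpret PT: product_sigma_finite "\<lambda>_::nat + nat. N" unfolding product_sigma_finite_def using N by simp
  interpret PX: sigma_finite_measure "PiM {..<m} (\<lambda>_. N)" by (rule PN.sigma_finite) simp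
  interpret NN: sigma_finite_measure "N \<Otimes>\<^sub>M N" by (rule sigma_finite_pair_measure[OF N N])
  interpret PNN: sigma_finite_measure "PiM {..<m} (\<lambda>_. N) \<Otimes>\<^sub>M (N \<Otimes>\<^sub>M N)"
    by (rule sigma_finite_pair_measure[OF PX.sigma_finite_measure_axioms NN.sigma_finite_measure_axioms])
  show ?thesis
  proof (rule PT.PiM_eqI)
    fix A assume A: "\<And>i. i \<in> ?T \<Longrightarrow> A i \<in> sets N"
    then have AL: "\<And>j. j \<le> m \<Longrightarrow> A (Inl j) \<in> sets N" and AR: "\<And>j. j \<le> m \<Longrightarrow> A (Inr j) \<in> sets N"
      by auto
    have box_sets: "PiE {..<m} (\<lambda>j. A (Inl j)) \<in> sets (PiM {..<m} (\<lambda>_. N))"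
      "PiE {..<m} (\<lambda>j. A (Inr j)) \<in> sets (PiM {..<m} (\<lambda>_. N))"
      "A (Inl m) \<in> sets N" "A (Inr m) \<in> sets N"
      using AL AR by (auto intro!: sets_PiM_I_finite)
    have box_measures: "emeasure (PiM {..<m} (\<lambda>_. N)) (PiE {..<m} (\<lambda>j. A (Inl j))) = (\<Prod>j<m. emeasure N (A (Inl j)))"
      "emeasure (PiM {..<m} (\<lambda>_. N)) (PiE {..<m} (\<lambda>j. A (Inr j))) = (\<Prod>j<m. emeasure N (A (Inr j)))"
      using AL AR by (auto intro!: PN.emeasure_PiM)
    have "emeasure (distr ?Q (PiM ?T (\<lambda>_. N)) (assemble_steps m)) (PiE ?T A)
        = emeasure ?Q (assemble_steps m -` PiE ?T A \<inter> space ?Q)"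
      using A by (intro emeasure_distr[OF measurable_assemble_steps] sets_PiM_I_finite) auto
    also have "\<dots> = emeasure ?Q (PiE {..<m} (\<lambda>j. A (Inl j)) \<times> (PiE {..<m} (\<lambda>j. A (Inr j)) \<times> (A (Inl m) \<times> A (Inr m))))"
      by (simp only: vimage_assemble_steps_PiE[OF A])
    also have "\<dots> = emeasure (PiM {..<m} (\<lambda>_. N)) (PiE {..<m} (\<lambda>j. A (Inl j))) *
          (emeasure (PiM {..<m} (\<lambda>_. N)) (PiE {..<m} (\<lambda>j. A (Inr j))) *
           (emeasure N (A (Inl m)) * emeasure N (A (Inr m))))"
      using box_sets
      by (simp only: PNN.emeasure_pair_measure_Times NN.emeasure_pair_measure_Times
          N.emeasure_pair_measure_Times pair_measureI)
    also have "\<dots> = (\<Prod>j<Suc m. emeasure N (A (Inl j))) * (\<Prod>j<Suc m. emeasure N (A (Inr j)))"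
      by (simp add: box_measures mult_ac)
    also have "\<dots> = (\<Prod>i\<in>?T. emeasure N (A i))"
      by (subst prod.union_disjoint) (auto simp: prod.reindex)
    finally show "emeasure (distr ?Q (PiM ?T (\<lambda>_. N)) (assemble_steps m)) (PiE ?T A) = (\<Prod>i\<in>?T. emeasure N (A i))" .
  qed (simp_all cong: sets_PiM_cong)
qed

lemma nn_integral_PiM_assemble_steps:
  fixes F :: "(nat + nat \<Rightarrow> real) \<Rightarrow> ennreal"
  assumes F: "F \<in> borel_measurable (PiM (Inl ` {..<Suc m} \<union> Inr ` {..<Suc m}) (\<lambda>_. lborel))"
  shows "(\<integral>\<^sup>+v. F v \<partial>PiM (Inl ` {..<Suc m} \<union> Inr ` {..<Suc m}) (\<lambda>_. lborel))
       = (\<integral>\<^sup>+x. \<integral>\<^sup>+\<xi>. \<integral>\<^sup>+r. \<integral>\<^sup>+\<phi>. F (assemble_steps m (x, \<xi>, r, \<phi>))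
            \<partial>lborel \<partial>lborel \<partial>PiM {..<m} (\<lambda>_. lborel) \<partial>PiM {..<m} (\<lambda>_. lborel))"
proof -
  have sf: "sigma_finite_measure (PiM {..<m} (\<lambda>_. lborel :: real measure))"
    by (rule sigma_finite_PiM_lborel) simp
  have "(\<integral>\<^sup>+v. F v \<partial>PiM (Inl ` {..<Suc m} \<union> Inr ` {..<Suc m}) (\<lambda>_. lborel))
      = (\<integral>\<^sup>+w. F (assemble_steps m w)
          \<partial>(PiM {..<m} (\<lambda>_. lborel) \<Otimes>\<^sub>M (PiM {..<m} (\<lambda>_. lborel) \<Otimes>\<^sub>M (lborel \<Otimes>\<^sub>M lborel))))"
    by (subst distr_assemble_steps[OF lborel.sigma_finite_measure_axioms, symmetric])
      (use F in \<open>simp add: nn_integral_distr[OF measurable_assemble_steps]\<close>)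
  also have "\<dots> = (\<integral>\<^sup>+x. \<integral>\<^sup>+\<xi>. \<integral>\<^sup>+r. \<integral>\<^sup>+\<phi>. F (assemble_steps m (x, \<xi>, r, \<phi>))
            \<partial>lborel \<partial>lborel \<partial>PiM {..<m} (\<lambda>_. lborel) \<partial>PiM {..<m} (\<lambda>_. lborel))"
    using nn_integral_nested_pair_measure[OF sf lborel.sigma_finite_measure_axioms
        lborel.sigma_finite_measure_axioms measurable_compose[OF measurable_assemble_steps F]]
    by simp
  finally show ?thesis .
qed

section \<open>The last step of the walk\<close>

definition step_expectation ::
  "(real \<Rightarrow> real) \<Rightarrow> (real \<times> real \<Rightarrow> ennreal) \<Rightarrow> real \<Rightarrow> real \<Rightarrow> real \<Rightarrow> ennreal" where
  "step_expectation f h s a b =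
     (\<integral>\<^sup>+r. ennreal (f r * indicator {0..} r) *
        (\<integral>\<^sup>+\<phi>. ennreal (angle_density \<phi>) * h (s + r, sqrt ((a + r * cos \<phi>)\<^sup>2 + (b + r * sin \<phi>)\<^sup>2)) \<partial>lborel)
      \<partial>lborel)"

lemma nn_integral_annulus_step:
  fixes K r a b :: real and h :: "real \<Rightarrow> ennreal" and f :: "real \<Rightarrow> real"
  assumes K: "K > 0" and ab: "a\<^sup>2 + b\<^sup>2 = K\<^sup>2" and [measurable]: "h \<in> borel_measurable borel"
    and f_nonneg: "\<And>x. 0 \<le> f x" and "r \<noteq> 0" and "r \<noteq> K"
  shows "(\<integral>\<^sup>+z. ennreal (f r * circle_distance_density K r z) * indicator {\<bar>r - K\<bar>..r + K} z * h z \<partial>lborel)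
       = ennreal (f r * indicator {0..} r) *
         (\<integral>\<^sup>+\<phi>. ennreal (angle_density \<phi>) * h (sqrt ((a + r * cos \<phi>)\<^sup>2 + (b + r * sin \<phi>)\<^sup>2)) \<partial>lborel)"
proof (cases "r < 0")
  case True
  \<comment> \<open>The annulus is empty, so the claimed density never evaluates f at a negative radius.\<close>
  then have "{\<bar>r - K\<bar>..r + K} = {}" using K by auto
  with True show ?thesis by simp
next
  case False
  with \<open>r \<noteq> 0\<close> have r: "r > 0" by simp
  have "(\<integral>\<^sup>+z. ennreal (f r * circle_distance_density K r z) * indicator {\<bar>r - K\<bar>..r + K} z * h z \<partial>lborel)
      = ennreal (f r) * (\<integral>\<^sup>+z. ennreal (circle_distance_density K r z) * indicator {\<bar>r - K\<bar>..r + K} z * h z \<partial>lborel)"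
    unfolding ennreal_mult'[OF f_nonneg] mult.assoc
    by (rule nn_integral_cmult) (unfold circle_distance_density_def, measurable)
  also have "\<dots> = ennreal (f r) *
      (\<integral>\<^sup>+\<phi>. ennreal (angle_density \<phi>) * h (sqrt ((a + r * cos \<phi>)\<^sup>2 + (b + r * sin \<phi>)\<^sup>2)) \<partial>lborel)"
    using K r \<open>r \<noteq> K\<close> ab by (simp add: nn_integral_circle_distance)
  finally show ?thesis using r by simp
qed

lemma nn_integral_last_step:
  fixes J K a b :: real and h :: "real \<times> real \<Rightarrow> ennreal" and f :: "real \<Rightarrow> real"
  assumes K: "K > 0" and ab: "a\<^sup>2 + b\<^sup>2 = K\<^sup>2"
    and [measurable]: "h \<in> borel_measurable (lborel \<Otimes>\<^sub>M lborel)"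
    and f_nonneg: "\<And>x. 0 \<le> f x" and [measurable]: "f \<in> borel_measurable borel"
  shows "(\<integral>\<^sup>+p. ennreal (f (fst p - J) * circle_distance_density K (fst p - J) (snd p)) *
            indicator {p. \<bar>fst p - J - K\<bar> \<le> snd p \<and> snd p \<le> fst p - J + K} p * h p \<partial>(lborel \<Otimes>\<^sub>M lborel))
       = step_expectation f h J a b"
proof -
  define \<Psi> where "\<Psi> s z = ennreal (f (s - J) * circle_distance_density K (s - J) z) *
      indicator {\<bar>s - J - K\<bar>..s - J + K} z * h (s, z)" for s z
  have [measurable]: "(\<lambda>(s, z). \<Psi> s z) \<in> borel_measurable (lborel \<Otimes>\<^sub>M lborel)"
    unfolding \<Psi>_def circle_distance_density_def indicator_def atLeastAtMost_iff by measurable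
  have "(\<integral>\<^sup>+p. ennreal (f (fst p - J) * circle_distance_density K (fst p - J) (snd p)) *
            indicator {p. \<bar>fst p - J - K\<bar> \<le> snd p \<and> snd p \<le> fst p - J + K} p * h p \<partial>(lborel \<Otimes>\<^sub>M lborel))
      = (\<integral>\<^sup>+p. (\<lambda>(s, z). \<Psi> s z) p \<partial>(lborel \<Otimes>\<^sub>M lborel))"
    by (rule nn_integral_cong) (auto simp: \<Psi>_def indicator_def split: prod.splits)
  also have "\<dots> = (\<integral>\<^sup>+s. \<integral>\<^sup>+z. \<Psi> s z \<partial>lborel \<partial>lborel)"
    by (subst lborel.nn_integral_fst[symmetric]) auto
  also have "\<dots> = (\<integral>\<^sup>+r. \<integral>\<^sup>+z. \<Psi> (J + r) z \<partial>lborel \<partial>lborel)"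
    by (rule nn_integral_lborel_shift) measurable
  also have "\<dots> = step_expectation f h J a b"
    unfolding step_expectation_def
  proof (rule nn_integral_cong_AE)
    show "AE r in lborel. (\<integral>\<^sup>+z. \<Psi> (J + r) z \<partial>lborel) = ennreal (f r * indicator {0..} r) *
        (\<integral>\<^sup>+\<phi>. ennreal (angle_density \<phi>) * h (J + r, sqrt ((a + r * cos \<phi>)\<^sup>2 + (b + r * sin \<phi>)\<^sup>2)) \<partial>lborel)"
      using AE_lborel_singleton[of 0] AE_lborel_singleton[of K]
    proof eventually_elim
      case (elim r)
      have "(\<lambda>z. h (J + r, z)) \<in> borel_measurable borel" by measurable
      from nn_integral_annulus_step[OF K ab this f_nonneg elim] show ?case by (simp add: \<Psi>_def)
    qed
  qed
  finally show ?thesis .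
qed

definition walk_expectation :: "nat \<Rightarrow> (real \<Rightarrow> real) \<Rightarrow> (real \<times> real \<Rightarrow> ennreal) \<Rightarrow> ennreal" where
  "walk_expectation n f h =
     (\<integral>\<^sup>+x. \<integral>\<^sup>+\<xi>. ennreal (\<Prod>i<n-1. f (x i) * indicator {0..} (x i)) * ennreal (\<Prod>i<n-1. angle_density (\<xi> i)) *
        step_expectation f h (J_n n x) (\<Sum>i<n-1. x i * cos (\<xi> i)) (\<Sum>i<n-1. x i * sin (\<xi> i))
      \<partial>PiM {..<n-1} (\<lambda>_. lborel) \<partial>PiM {..<n-1} (\<lambda>_. lborel))"

section \<open>Integrating against the claimed density\<close>

lemma double_sum_cos_diff:
  fixes x \<xi> :: "nat \<Rightarrow> real"
  shows "(\<Sum>i\<in>I. \<Sum>j\<in>I. x i * x j * cos (\<xi> i - \<xi> j)) = (\<Sum>i\<in>I. x i * cos (\<xi> i))\<^sup>2 + (\<Sum>i\<in>I. x i * sin (\<xi> i))\<^sup>2"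
  by (simp only: cos_diff) (simp add: power2_eq_square sum_product sum.distrib[symmetric] algebra_simps)

lemma K_n_eq_cos_sin_sums:
  fixes x \<xi> :: "nat \<Rightarrow> real"
  shows "K_n n x \<xi> = sqrt ((\<Sum>i<n-1. x i * cos (\<xi> i))\<^sup>2 + (\<Sum>i<n-1. x i * sin (\<xi> i))\<^sup>2)"
  unfolding K_n_def double_sum_cos_diff ..

lemma countable_cos_sin_fiber: "countable {t::real. cos t = c \<and> sin t = d}"
proof (cases "{t::real. cos t = c \<and> sin t = d} = {}")
  case False
  then obtain t0 where t0: "cos t0 = c" "sin t0 = d" by auto
  have "{t::real. cos t = c \<and> sin t = d} \<subseteq> range (\<lambda>k::int. t0 + 2 * pi * real_of_int k)"
  proof
    fix t assume "t \<in> {t::real. cos t = c \<and> sin t = d}"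
    then have "sin t = sin t0 \<and> cos t = cos t0" using t0 by auto
    then obtain k :: int where "t = t0 + 2 * pi * real_of_int k" using sin_cos_eq_iff by blast
    then show "t \<in> range (\<lambda>k::int. t0 + 2 * pi * real_of_int k)" by auto
  qed
  then show ?thesis by (rule countable_subset) simp
next
  case True then show ?thesis by (metis countable_empty)
qed

lemma AE_K_n_nonzero_angles:
  fixes x :: "nat \<Rightarrow> real"
  assumes n: "n \<ge> 2" and x0: "x 0 \<noteq> 0"
  shows "AE \<xi> in PiM {..<n-1} (\<lambda>_. lborel). K_n n x \<xi> \<noteq> 0"
proof (rule AE_PiM_lborel_coordinate[where i=0])
  show "Measurable.pred (PiM {..<n-1} (\<lambda>_. lborel)) (\<lambda>\<xi>. K_n n x \<xi> = 0)"
    unfolding K_n_def by measurable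
  have I0: "0 \<in> {..<n-1}" using n by simp
  fix y :: "nat \<Rightarrow> real"
  define A where "A = (\<Sum>i\<in>{..<n-1}-{0}. x i * cos (y i))"
  define B where "B = (\<Sum>i\<in>{..<n-1}-{0}. x i * sin (y i))"
  \<comment> \<open>With the other angles fixed, K_n = 0 pins (cos t, sin t) to one point of the circle.\<close>
  have "{t. K_n n x (y(0 := t)) = 0} \<subseteq> {t. cos t = - A / x 0 \<and> sin t = - B / x 0}"
  proof safe
    fix t assume K0: "K_n n x (y(0 := t)) = 0"
    have "(\<Sum>i<n-1. x i * cos ((y(0 := t)) i)) = x 0 * cos t + A"
      unfolding A_def by (subst sum.remove[OF _ I0]) (auto intro!: sum.cong)
    moreover have "(\<Sum>i<n-1. x i * sin ((y(0 := t)) i)) = x 0 * sin t + B"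
      unfolding B_def by (subst sum.remove[OF _ I0]) (auto intro!: sum.cong)
    ultimately have "(x 0 * cos t + A)\<^sup>2 + (x 0 * sin t + B)\<^sup>2 = 0"
      using K0 unfolding K_n_eq_cos_sin_sums by simp
    then have "x 0 * cos t + A = 0" "x 0 * sin t + B = 0"
      by (simp_all add: sum_power2_eq_zero_iff)
    then show "cos t = - A / x 0" "sin t = - B / x 0"
      using x0 by (simp_all add: field_simps)
  qed
  moreover have "AE t in lborel. t \<notin> {t. cos t = - A / x 0 \<and> sin t = - B / x 0}"
    by (rule AE_not_in[OF countable_imp_null_set_lborel[OF countable_cos_sin_fiber]])
  ultimately show "AE t in lborel. \<not> K_n n x (y(0 := t)) = 0"
    by (auto elim!: eventually_mono)
qed (use n in simp_all)

lemma AE_K_n_nonzero: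
  assumes n: "n \<ge> 2"
  shows "AE x in PiM {..<n-1} (\<lambda>_. lborel). AE \<xi> in PiM {..<n-1} (\<lambda>_. lborel). K_n n x \<xi> \<noteq> 0"
proof -
  have "AE x in PiM {..<n-1} (\<lambda>_. lborel :: real measure). \<not> x 0 = 0"
  proof (rule AE_PiM_lborel_coordinate[where i=0])
    have "0 \<in> {..<n-1}" using n by simp
    then show "Measurable.pred (PiM {..<n-1} (\<lambda>_. lborel)) (\<lambda>x::nat\<Rightarrow>real. x 0 = 0)"
      by measurable
    show "AE t in lborel. \<not> (y(0 := t)) 0 = 0" for y :: "nat \<Rightarrow> real"
      using AE_lborel_singleton[of 0] by simp
  qed (use n in simp_all)
  then show ?thesis
    by eventually_elim (use AE_K_n_nonzero_angles[OF n] in auto)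
qed

definition joint_density_integrand ::
  "nat \<Rightarrow> (real \<Rightarrow> real) \<Rightarrow> real \<times> real \<Rightarrow> (nat \<Rightarrow> real) \<Rightarrow> (nat \<Rightarrow> real) \<Rightarrow> ennreal" where
  "joint_density_integrand n f p x \<xi> = indicator {(x, \<xi>). region n (fst p) (snd p) x \<xi>} (x, \<xi>) *
     ennreal (f (fst p - J_n n x) * (\<Prod>i<n-1. f (x i)) /
       sqrt (((snd p)\<^sup>2 - (fst p - J_n n x - K_n n x \<xi>)\<^sup>2) * ((fst p - J_n n x + K_n n x \<xi>)\<^sup>2 - (snd p)\<^sup>2)))"

lemma joint_density_eq: "joint_density f n p = ennreal (4 * snd p / (2*pi)^n) *
   (\<integral>\<^sup>+x. \<integral>\<^sup>+\<xi>. joint_density_integrand n f p x \<xi> \<partial>PiM {..<n-1} (\<lambda>_. lborel) \<partial>PiM {..<n-1} (\<lambda>_. lborel))"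
  by (cases p) (simp add: joint_density_def joint_density_integrand_def)

lemma prod_indicator_ennreal:
  "finite I \<Longrightarrow> (\<Prod>i\<in>I. indicator (A i) (x i) :: ennreal) = (if \<forall>i\<in>I. x i \<in> A i then 1 else 0)"
  by (auto simp: indicator_def intro: prod_zero)

lemma borel_measurable_joint_density_integrand:
  assumes [measurable]: "f \<in> borel_measurable borel"
  shows "(\<lambda>((p, x), \<xi>). joint_density_integrand n f p x \<xi>)
    \<in> borel_measurable (((lborel \<Otimes>\<^sub>M lborel) \<Otimes>\<^sub>M PiM {..<n-1} (\<lambda>_. lborel)) \<Otimes>\<^sub>M PiM {..<n-1} (\<lambda>_. lborel))"
proof -
  have [measurable]: "(\<lambda>(x, \<xi>). K_n n x \<xi>) \<in> borel_measurable (PiM {..<n-1} (\<lambda>_. lborel) \<Otimes>\<^sub>M PiM {..<n-1} (\<lambda>_. lborel))"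
    unfolding K_n_def by measurable
  have [measurable]: "J_n n \<in> borel_measurable (PiM {..<n-1} (\<lambda>_. lborel))"
    unfolding J_n_def by measurable
  have integrand_eq: "joint_density_integrand n f p x \<xi> =
      (\<Prod>i<n-1. indicator {0..} (x i)) * (\<Prod>i<n-1. indicator {0..<2*pi} (\<xi> i)) *
      indicator {p. \<bar>fst p - J_n n x - K_n n x \<xi>\<bar> \<le> snd p \<and> snd p \<le> fst p - J_n n x + K_n n x \<xi>} p *
      ennreal (f (fst p - J_n n x) * (\<Prod>i<n-1. f (x i)) /
        sqrt (((snd p)\<^sup>2 - (fst p - J_n n x - K_n n x \<xi>)\<^sup>2) * ((fst p - J_n n x + K_n n x \<xi>)\<^sup>2 - (snd p)\<^sup>2)))"
    for p x \<xi>
    unfolding joint_density_integrand_def prod_indicator_ennreal[OF finite_lessThan]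
    by (auto simp: region_def indicator_def)
  show ?thesis unfolding split_beta' integrand_eq by measurable
qed

lemma joint_density_integrand_eq_annulus:
  fixes n :: nat and f :: "real \<Rightarrow> real" and x \<xi> :: "nat \<Rightarrow> real" and p :: "real \<times> real"
  defines "J \<equiv> J_n n x" and "K \<equiv> K_n n x \<xi>"
  assumes n: "n \<ge> 1" and f_nonneg: "\<And>x. 0 \<le> f x"
    and coordinates: "\<forall>i<n-1. 0 \<le> x i \<and> 0 \<le> \<xi> i \<and> \<xi> i < 2*pi"
  shows "ennreal (4 * snd p / (2*pi)^n) * joint_density_integrand n f p x \<xi>
       = ennreal ((\<Prod>i<n-1. f (x i)) * (1 / (2*pi))^(n-1)) *
         (ennreal (f (fst p - J) * circle_distance_density K (fst p - J) (snd p)) *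
          indicator {p. \<bar>fst p - J - K\<bar> \<le> snd p \<and> snd p \<le> fst p - J + K} p)"
proof (cases "\<bar>fst p - J - K\<bar> \<le> snd p \<and> snd p \<le> fst p - J + K")
  case in_annulus: True
  define P where "P = (\<Prod>i<n-1. f (x i))"
  define Q where "Q = sqrt (((snd p)\<^sup>2 - (fst p - J - K)\<^sup>2) * ((fst p - J + K)\<^sup>2 - (snd p)\<^sup>2))"
  obtain m where m: "n = Suc m" using n by (cases n) auto
  have "4 * snd p / (2*pi)^n * (f (fst p - J) * P / Q)
      = P * (1 / (2*pi))^(n-1) * (f (fst p - J) * (2 * snd p / (pi * Q)))"
    unfolding m by (simp add: power_one_over mult_ac)
  moreover have "P \<ge> 0" unfolding P_def by (simp add: prod_nonneg f_nonneg)
  moreover have "snd p \<ge> 0" using in_annulus by linarith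
  ultimately show ?thesis
    using coordinates in_annulus
    by (simp add: joint_density_integrand_def region_def J_def K_def P_def Q_def
        circle_distance_density_def ennreal_mult'[symmetric])
qed (simp add: joint_density_integrand_def region_def J_def K_def)

lemma nn_integral_joint_density_integrand:
  fixes f :: "real \<Rightarrow> real" and h :: "real \<times> real \<Rightarrow> ennreal" and x \<xi> :: "nat \<Rightarrow> real"
  assumes n: "n \<ge> 2" and f_nonneg: "\<And>x. 0 \<le> f x" and [measurable]: "f \<in> borel_measurable borel"
    and [measurable]: "h \<in> borel_measurable (lborel \<Otimes>\<^sub>M lborel)"
    and K_nonzero: "K_n n x \<xi> \<noteq> 0"
  shows "(\<integral>\<^sup>+p. ennreal (4 * snd p / (2*pi)^n) * h p * joint_density_integrand n f p x \<xi> \<partial>(lborel \<Otimes>\<^sub>M lborel))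
    = ennreal (\<Prod>i<n-1. f (x i) * indicator {0..} (x i)) * ennreal (\<Prod>i<n-1. angle_density (\<xi> i)) *
      step_expectation f h (J_n n x) (\<Sum>i<n-1. x i * cos (\<xi> i)) (\<Sum>i<n-1. x i * sin (\<xi> i))"
proof (cases "\<forall>i<n-1. 0 \<le> x i \<and> 0 \<le> \<xi> i \<and> \<xi> i < 2*pi")
  case False
  then obtain i where i: "i < n-1" "\<not> (0 \<le> x i \<and> 0 \<le> \<xi> i \<and> \<xi> i < 2*pi)" by auto
  then have "f (x i) * indicator {0..} (x i) = 0 \<or> angle_density (\<xi> i) = 0"
    by (auto simp: angle_density_def)
  with i have "(\<Prod>i<n-1. f (x i) * indicator {0..} (x i)) = 0 \<or> (\<Prod>i<n-1. angle_density (\<xi> i)) = 0"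
    by (auto intro: prod_zero)
  then have zero: "ennreal (\<Prod>i<n-1. f (x i) * indicator {0..} (x i)) * ennreal (\<Prod>i<n-1. angle_density (\<xi> i)) = 0"
    by (metis ennreal_0 mult_zero_left mult_zero_right)
  have "joint_density_integrand n f p x \<xi> = 0" for p
    using False by (simp add: joint_density_integrand_def region_def)
  then show ?thesis unfolding zero by simp
next
  case True
  define J where "J = J_n n x"
  define K where "K = K_n n x \<xi>"
  define c where "c = (\<Prod>i<n-1. f (x i)) * (1 / (2*pi))^(n-1)"
  define I where "I p = ennreal (f (fst p - J) * circle_distance_density K (fst p - J) (snd p)) *
      indicator {p. \<bar>fst p - J - K\<bar> \<le> snd p \<and> snd p \<le> fst p - J + K} p * h p" for p
  have "K \<ge> 0" unfolding K_def K_n_eq_cos_sin_sums by simp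
  with K_nonzero have K_pos: "K > 0" unfolding K_def by simp
  have [measurable]: "I \<in> borel_measurable (lborel \<Otimes>\<^sub>M lborel)"
    unfolding I_def circle_distance_density_def by measurable
  have "(\<integral>\<^sup>+p. ennreal (4 * snd p / (2*pi)^n) * h p * joint_density_integrand n f p x \<xi> \<partial>(lborel \<Otimes>\<^sub>M lborel))
      = (\<integral>\<^sup>+p. ennreal c * I p \<partial>(lborel \<Otimes>\<^sub>M lborel))"
    using joint_density_integrand_eq_annulus[OF _ f_nonneg True] n
    by (intro nn_integral_cong) (simp add: c_def I_def J_def K_def mult_ac)
  also have "\<dots> = ennreal c * (\<integral>\<^sup>+p. I p \<partial>(lborel \<Otimes>\<^sub>M lborel))"
    by (rule nn_integral_cmult) measurable
  also have "(\<integral>\<^sup>+p. I p \<partial>(lborel \<Otimes>\<^sub>M lborel))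
      = step_expectation f h J (\<Sum>i<n-1. x i * cos (\<xi> i)) (\<Sum>i<n-1. x i * sin (\<xi> i))"
    unfolding I_def using K_pos
    by (rule nn_integral_last_step) (auto simp: K_def K_n_eq_cos_sin_sums f_nonneg)
  also have "c = (\<Prod>i<n-1. f (x i) * indicator {0..} (x i)) * (\<Prod>i<n-1. angle_density (\<xi> i))"
    using True by (simp add: c_def angle_density_def power_one_over)
  finally show ?thesis
    by (simp add: ennreal_mult' prod_nonneg angle_density_nonneg f_nonneg J_def)
qed

lemma borel_measurable_joint_density_integrand_section:
  assumes "f \<in> borel_measurable borel"
  shows "(\<lambda>(x, \<xi>). joint_density_integrand n f p x \<xi>)
    \<in> borel_measurable (PiM {..<n-1} (\<lambda>_. lborel) \<Otimes>\<^sub>M PiM {..<n-1} (\<lambda>_. lborel))"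
proof -
  let ?PX = "PiM {..<n-1} (\<lambda>_. lborel :: real measure)"
  have "(\<lambda>w. ((p, fst w), snd w)) \<in> ?PX \<Otimes>\<^sub>M ?PX \<rightarrow>\<^sub>M ((lborel \<Otimes>\<^sub>M lborel) \<Otimes>\<^sub>M ?PX) \<Otimes>\<^sub>M ?PX"
    by (auto intro!: measurable_Pair measurable_const measurable_fst measurable_snd simp: space_pair_measure)
  from measurable_compose[OF this borel_measurable_joint_density_integrand[OF assms]] show ?thesis
    by (simp add: split_beta')
qed

lemma joint_density_mult_eq_nn_integral:
  assumes "f \<in> borel_measurable borel"
  shows "joint_density f n p * c = (\<integral>\<^sup>+x. \<integral>\<^sup>+\<xi>. ennreal (4 * snd p / (2*pi)^n) * c * joint_density_integrand n f p x \<xi>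
           \<partial>PiM {..<n-1} (\<lambda>_. lborel) \<partial>PiM {..<n-1} (\<lambda>_. lborel))"
proof -
  let ?PX = "PiM {..<n-1} (\<lambda>_. lborel :: real measure)"
  interpret PX: sigma_finite_measure ?PX by (rule sigma_finite_PiM_lborel) simp
  note integrand_section = borel_measurable_joint_density_integrand_section[OF assms, of n p]
  have "joint_density f n p * c
      = ennreal (4 * snd p / (2*pi)^n) * c * (\<integral>\<^sup>+x. \<integral>\<^sup>+\<xi>. joint_density_integrand n f p x \<xi> \<partial>?PX \<partial>?PX)"
    unfolding joint_density_eq by (simp add: mult_ac)
  also have "\<dots> = (\<integral>\<^sup>+x. ennreal (4 * snd p / (2*pi)^n) * c * (\<integral>\<^sup>+\<xi>. joint_density_integrand n f p x \<xi> \<partial>?PX) \<partial>?PX)"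
    using PX.borel_measurable_nn_integral[OF integrand_section] by (rule nn_integral_cmult[symmetric])
  also have "\<dots> = (\<integral>\<^sup>+x. \<integral>\<^sup>+\<xi>. ennreal (4 * snd p / (2*pi)^n) * c * joint_density_integrand n f p x \<xi> \<partial>?PX \<partial>?PX)"
    by (intro nn_integral_cong nn_integral_cmult[symmetric]) (use measurable_Pair2[OF integrand_section] in simp)
  finally show ?thesis .
qed

lemma nn_integral_joint_density:
  fixes f :: "real \<Rightarrow> real" and h :: "real \<times> real \<Rightarrow> ennreal"
  assumes n: "n \<ge> 2" and f_nonneg: "\<And>x. 0 \<le> f x" and f_meas[measurable]: "f \<in> borel_measurable borel"
    and h_meas[measurable]: "h \<in> borel_measurable (lborel \<Otimes>\<^sub>M lborel)"
  shows "(\<integral>\<^sup>+p. joint_density f n p * h p \<partial>(lborel \<Otimes>\<^sub>M lborel)) = walk_expectation n f h"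
proof -
  let ?PX = "PiM {..<n-1} (\<lambda>_. lborel :: real measure)"
  define \<Phi> where "\<Phi> p x \<xi> = ennreal (4 * snd p / (2*pi)^n) * h p * joint_density_integrand n f p x \<xi>" for p x \<xi>
  have sf_PX: "sigma_finite_measure ?PX" by (rule sigma_finite_PiM_lborel) simp
  have [measurable]: "(\<lambda>w. joint_density_integrand n f (fst (fst w)) (snd (fst w)) (snd w))
      \<in> borel_measurable (((lborel \<Otimes>\<^sub>M lborel) \<Otimes>\<^sub>M ?PX) \<Otimes>\<^sub>M ?PX)"
    using borel_measurable_joint_density_integrand[OF f_meas, of n] by (simp add: split_beta')
  have "(\<integral>\<^sup>+p. joint_density f n p * h p \<partial>(lborel \<Otimes>\<^sub>M lborel))
      = (\<integral>\<^sup>+p. \<integral>\<^sup>+x. \<integral>\<^sup>+\<xi>. \<Phi> p x \<xi> \<partial>?PX \<partial>?PX \<partial>(lborel \<Otimes>\<^sub>M lborel))"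
    by (simp add: \<Phi>_def joint_density_mult_eq_nn_integral[OF f_meas])
  also have "\<dots> = (\<integral>\<^sup>+x. \<integral>\<^sup>+\<xi>. \<integral>\<^sup>+p. \<Phi> p x \<xi> \<partial>(lborel \<Otimes>\<^sub>M lborel) \<partial>?PX \<partial>?PX)"
    by (rule nn_integral_rotate_outer_inward[OF lborel_pair.P.sigma_finite_measure_axioms sf_PX sf_PX])
      (unfold \<Phi>_def split_beta', measurable)
  also have "\<dots> = walk_expectation n f h"
    unfolding walk_expectation_def
  proof (rule nn_integral_cong_AE)
    show "AE x in ?PX. (\<integral>\<^sup>+\<xi>. \<integral>\<^sup>+p. \<Phi> p x \<xi> \<partial>(lborel \<Otimes>\<^sub>M lborel) \<partial>?PX) =
      (\<integral>\<^sup>+\<xi>. ennreal (\<Prod>i<n-1. f (x i) * indicator {0..} (x i)) * ennreal (\<Prod>i<n-1. angle_density (\<xi> i)) *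
        step_expectation f h (J_n n x) (\<Sum>i<n-1. x i * cos (\<xi> i)) (\<Sum>i<n-1. x i * sin (\<xi> i)) \<partial>?PX)"
      using AE_K_n_nonzero[OF n]
    proof eventually_elim
      case (elim x)
      then show ?case
        by (intro nn_integral_cong_AE, elim eventually_mono)
          (unfold \<Phi>_def, erule nn_integral_joint_density_integrand[OF n f_nonneg f_meas h_meas])
    qed
  qed
  finally show ?thesis .
qed

lemma borel_measurable_joint_density:
  assumes "f \<in> borel_measurable borel"
  shows "joint_density f n \<in> borel_measurable (lborel \<Otimes>\<^sub>M lborel)"
proof -
  let ?PX = "PiM {..<n-1} (\<lambda>_. lborel :: real measure)"
  interpret PX: sigma_finite_measure ?PX by (rule sigma_finite_PiM_lborel) simp
  have "(\<lambda>(p, x). \<integral>\<^sup>+\<xi>. joint_density_integrand n f p x \<xi> \<partial>?PX) \<in> borel_measurable ((lborel \<Otimes>\<^sub>M lborel) \<Otimes>\<^sub>M ?PX)"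
    using PX.borel_measurable_nn_integral[OF borel_measurable_joint_density_integrand[OF assms, of n]]
    by (simp add: split_beta')
  then have "(\<lambda>p. \<integral>\<^sup>+x. \<integral>\<^sup>+\<xi>. joint_density_integrand n f p x \<xi> \<partial>?PX \<partial>?PX)
      \<in> borel_measurable (lborel \<Otimes>\<^sub>M lborel)"
    by (rule PX.borel_measurable_nn_integral)
  then show ?thesis unfolding joint_density_eq[abs_def] by measurable
qed

section \<open>Expectations over the random walk\<close>

definition radius_angle_density :: "(real \<Rightarrow> real) \<Rightarrow> nat + nat \<Rightarrow> real \<Rightarrow> ennreal" where
  "radius_angle_density f i t =
     (case i of Inl _ \<Rightarrow> ennreal (f t * indicator {0..} t) | Inr _ \<Rightarrow> ennreal (angle_density t))"

lemma radius_angle_density_simps [simp]: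
  "radius_angle_density f (Inl j) = (\<lambda>t. ennreal (f t * indicator {0..} t))"
  "radius_angle_density f (Inr j) = (\<lambda>t. ennreal (angle_density t))"
  by (simp_all add: fun_eq_iff radius_angle_density_def)

lemma borel_measurable_radius_angle_density:
  assumes [measurable]: "f \<in> borel_measurable borel"
  shows "radius_angle_density f i \<in> borel_measurable borel"
  by (cases i) simp_all

lemma distr_radii_angles:
  fixes M :: "'a measure" and R \<Theta> :: "nat \<Rightarrow> 'a \<Rightarrow> real" and f :: "real \<Rightarrow> real"
  assumes "prob_space M" and n: "n \<ge> 1" and f_meas: "f \<in> borel_measurable borel"
    and R_nonneg: "\<And>i. i < n \<Longrightarrow> \<forall>\<omega>\<in>space M. 0 \<le> R i \<omega>"
    and R_distr: "\<And>i. i < n \<Longrightarrow> distributed M lborel (R i) (\<lambda>x. ennreal (f x))"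
    and \<Theta>_distr: "\<And>i. i < n \<Longrightarrow> distributed M lborel (\<Theta> i) (\<lambda>x. ennreal (indicator {0..<2*pi} x / (2*pi)))"
    and indep: "prob_space.indep_vars M (\<lambda>_. borel) (case_sum R \<Theta>) (Inl ` {..<n} \<union> Inr ` {..<n})"
  shows "distr M (PiM (Inl ` {..<n} \<union> Inr ` {..<n}) (\<lambda>_. borel)) (\<lambda>\<omega>. \<lambda>i\<in>Inl ` {..<n} \<union> Inr ` {..<n}. case_sum R \<Theta> i \<omega>)
       = density (PiM (Inl ` {..<n} \<union> Inr ` {..<n}) (\<lambda>_. lborel))
           (\<lambda>v. \<Prod>i\<in>Inl ` {..<n} \<union> Inr ` {..<n}. radius_angle_density f i (v i))"
    (is "distr M (PiM ?T _) ?V = _")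
proof -
  interpret prob_space M by fact
  have marginal: "distr M borel (case_sum R \<Theta> i) = density lborel (radius_angle_density f i)"
    if "i \<in> ?T" for i
    using that distr_eq_density_nonneg_part[OF R_distr R_nonneg f_meas] distributed_distr_eq_density[OF \<Theta>_distr]
    by (auto simp: angle_density_def cong: distr_cong)
  have rv: "random_variable borel (case_sum R \<Theta> i)" if "i \<in> ?T" for i
    using that distributed_measurable[OF R_distr] distributed_measurable[OF \<Theta>_distr] by auto
  have zero_in_T: "Inl 0 \<in> ?T" "Inr 0 \<in> ?T" using n by auto
  have sf: "sigma_finite_measure (density lborel (radius_angle_density f i))" for i
  proof -
    from zero_in_T have "prob_space (density lborel (radius_angle_density f (Inl 0)))"
      "prob_space (density lborel (radius_angle_density f (Inr 0)))"
      using prob_space_distr[OF rv] marginal by metis+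
    then show ?thesis
      by (cases i) (auto intro: prob_space_imp_sigma_finite)
  qed
  have "?T \<noteq> {}" using zero_in_T by blast
  from indep_vars_iff_distr_eq_PiM'[OF this rv] indep
  have "distr M (PiM ?T (\<lambda>_. borel)) ?V = PiM ?T (\<lambda>i. distr M borel (case_sum R \<Theta> i))"
    by simp
  also have "\<dots> = PiM ?T (\<lambda>i. density lborel (radius_angle_density f i))"
    by (rule PiM_cong) (simp_all add: marginal)
  also have "\<dots> = density (PiM ?T (\<lambda>_. lborel)) (\<lambda>v. \<Prod>i\<in>?T. radius_angle_density f i (v i))"
    using sf borel_measurable_radius_angle_density[OF f_meas]
    by (intro PiM_density lborel.sigma_finite_measure_axioms) simp_all
  finally show ?thesis .
qed

definition walk_stats :: "nat \<Rightarrow> (nat + nat \<Rightarrow> real) \<Rightarrow> real \<times> real" where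
  "walk_stats n v = (\<Sum>i<n. v (Inl i),
     sqrt ((\<Sum>i<n. v (Inl i) * cos (v (Inr i)))\<^sup>2 + (\<Sum>i<n. v (Inl i) * sin (v (Inr i)))\<^sup>2))"

lemma measurable_walk_stats:
  assumes N: "sets N = sets borel"
  shows "walk_stats n \<in> PiM (Inl ` {..<n} \<union> Inr ` {..<n}) (\<lambda>_. N) \<rightarrow>\<^sub>M lborel \<Otimes>\<^sub>M lborel"
proof -
  let ?P = "PiM (Inl ` {..<n} \<union> Inr ` {..<n}) (\<lambda>_. N)"
  have step: "(\<lambda>v. g (v (Inl i), v (Inr i))) \<in> borel_measurable ?P"
    if "i < n" and g: "g \<in> borel_measurable (borel \<Otimes>\<^sub>M borel)" for i and g :: "real \<times> real \<Rightarrow> real"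
  proof -
    have "(\<lambda>v. v j) \<in> borel_measurable ?P" if "j \<in> Inl ` {..<n} \<union> Inr ` {..<n}" for j
      using measurable_component_singleton[OF that, of "\<lambda>_. N"] measurable_cong_sets[OF refl N] by metis
    with \<open>i < n\<close> have "(\<lambda>v. (v (Inl i), v (Inr i))) \<in> ?P \<rightarrow>\<^sub>M borel \<Otimes>\<^sub>M borel"
      by (intro measurable_Pair) auto
    from measurable_compose[OF this g] show ?thesis .
  qed
  have sums: "(\<lambda>v. \<Sum>i<n. g (v (Inl i), v (Inr i))) \<in> borel_measurable ?P"
    if "g \<in> borel_measurable (borel \<Otimes>\<^sub>M borel)" for g :: "real \<times> real \<Rightarrow> real"
    using step that by (intro borel_measurable_sum) auto
  have "fst \<in> borel_measurable (borel \<Otimes>\<^sub>M borel :: (real \<times> real) measure)"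
    "(\<lambda>(r, t). r * cos t :: real) \<in> borel_measurable (borel \<Otimes>\<^sub>M borel)"
    "(\<lambda>(r, t). r * sin t :: real) \<in> borel_measurable (borel \<Otimes>\<^sub>M borel)"
    by measurable
  from sums[OF this(1)] sums[OF this(2)] sums[OF this(3)] show ?thesis
    unfolding walk_stats_def by simp measurable
qed

lemma measurable_walk_stats_radii_angles:
  assumes "\<And>i. i < n \<Longrightarrow> R i \<in> borel_measurable M" and "\<And>i. i < n \<Longrightarrow> \<Theta> i \<in> borel_measurable M"
  shows "(\<lambda>\<omega>. walk_stats n (\<lambda>i. case_sum R \<Theta> i \<omega>)) \<in> M \<rightarrow>\<^sub>M lborel \<Otimes>\<^sub>M lborel"
proof -
  let ?T = "Inl ` {..<n} \<union> Inr ` {..<n}"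
  have "(\<lambda>\<omega>. \<lambda>i\<in>?T. case_sum R \<Theta> i \<omega>) \<in> M \<rightarrow>\<^sub>M PiM ?T (\<lambda>_. borel)"
    using assms by (intro measurable_restrict) auto
  from measurable_compose[OF this measurable_walk_stats[of borel n]] show ?thesis
    by (simp add: walk_stats_def)
qed

lemma walk_stats_assemble_steps:
  "walk_stats (Suc m) (assemble_steps m (x, \<xi>, r, \<phi>)) =
     (J_n (Suc m) x + r,
      sqrt (((\<Sum>i<m. x i * cos (\<xi> i)) + r * cos \<phi>)\<^sup>2 + ((\<Sum>i<m. x i * sin (\<xi> i)) + r * sin \<phi>)\<^sup>2))"
  by (auto simp: walk_stats_def assemble_steps_def J_n_def intro!: sum.cong)

lemma prod_radius_angle_density_assemble_steps:
  assumes "\<And>t. 0 \<le> f t"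
  shows "(\<Prod>i\<in>Inl ` {..<Suc m} \<union> Inr ` {..<Suc m}. radius_angle_density f i (assemble_steps m (x, \<xi>, r, \<phi>) i))
    = ennreal (\<Prod>i<m. f (x i) * indicator {0..} (x i)) * ennreal (\<Prod>i<m. angle_density (\<xi> i)) *
      (ennreal (f r * indicator {0..} r) * ennreal (angle_density \<phi>))"
proof -
  have "(\<Prod>i\<in>Inl ` {..<Suc m} \<union> Inr ` {..<Suc m}. radius_angle_density f i (assemble_steps m (x, \<xi>, r, \<phi>) i))
      = (\<Prod>j<Suc m. ennreal (f (if j < m then x j else r) * indicator {0..} (if j < m then x j else r))) *
        (\<Prod>j<Suc m. ennreal (angle_density (if j < m then \<xi> j else \<phi>)))"
    by (subst prod.union_disjoint) (auto simp: prod.reindex assemble_steps_def)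
  also have "\<dots> = ennreal (\<Prod>i<m. f (x i) * indicator {0..} (x i)) * ennreal (\<Prod>i<m. angle_density (\<xi> i)) *
      (ennreal (f r * indicator {0..} r) * ennreal (angle_density \<phi>))"
    using assms by (simp add: lessThan_Suc prod_ennreal angle_density_nonneg cong: prod.cong)
      (simp add: ennreal_mult prod_nonneg angle_density_nonneg mult_ac)
  finally show ?thesis .
qed

lemma nn_integral_step_expectation:
  assumes [measurable]: "f \<in> borel_measurable borel" "h \<in> borel_measurable (lborel \<Otimes>\<^sub>M lborel)"
  shows "(\<integral>\<^sup>+r. \<integral>\<^sup>+\<phi>. c * (ennreal (f r * indicator {0..} r) * ennreal (angle_density \<phi>)) *
            h (s + r, sqrt ((a + r * cos \<phi>)\<^sup>2 + (b + r * sin \<phi>)\<^sup>2)) \<partial>lborel \<partial>lborel)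
       = c * step_expectation f h s a b"
proof -
  define H where "H r \<phi> = h (s + r, sqrt ((a + r * cos \<phi>)\<^sup>2 + (b + r * sin \<phi>)\<^sup>2))" for r \<phi>
  have [measurable]: "(\<lambda>(r, \<phi>). H r \<phi>) \<in> borel_measurable (lborel \<Otimes>\<^sub>M lborel)"
    unfolding H_def by measurable
  have [measurable]: "(\<lambda>r. \<integral>\<^sup>+\<phi>. ennreal (angle_density \<phi>) * H r \<phi> \<partial>lborel) \<in> borel_measurable lborel"
    by (rule lborel.borel_measurable_nn_integral) measurable
  have "(\<integral>\<^sup>+r. \<integral>\<^sup>+\<phi>. c * (ennreal (f r * indicator {0..} r) * ennreal (angle_density \<phi>)) * H r \<phi> \<partial>lborel \<partial>lborel)
      = (\<integral>\<^sup>+r. c * (ennreal (f r * indicator {0..} r) * \<integral>\<^sup>+\<phi>. ennreal (angle_density \<phi>) * H r \<phi> \<partial>lborel) \<partial>lborel)"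
    by (intro nn_integral_cong) (simp add: nn_integral_cmult[symmetric] mult_ac)
  also have "\<dots> = c * step_expectation f h s a b"
    unfolding step_expectation_def H_def by (intro nn_integral_cmult) measurable
  finally show ?thesis unfolding H_def .
qed

lemma nn_integral_walk_stats:
  fixes M :: "'a measure" and R \<Theta> :: "nat \<Rightarrow> 'a \<Rightarrow> real" and f :: "real \<Rightarrow> real"
    and h :: "real \<times> real \<Rightarrow> ennreal"
  assumes M: "prob_space M" and n: "n \<ge> 1"
    and f_nonneg: "\<And>x. 0 \<le> f x" and f_meas[measurable]: "f \<in> borel_measurable borel"
    and R_nonneg: "\<And>i. i < n \<Longrightarrow> \<forall>\<omega>\<in>space M. 0 \<le> R i \<omega>"
    and R_distr: "\<And>i. i < n \<Longrightarrow> distributed M lborel (R i) (\<lambda>x. ennreal (f x))"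
    and \<Theta>_distr: "\<And>i. i < n \<Longrightarrow> distributed M lborel (\<Theta> i) (\<lambda>x. ennreal (indicator {0..<2*pi} x / (2*pi)))"
    and indep: "prob_space.indep_vars M (\<lambda>_. borel) (case_sum R \<Theta>) (Inl ` {..<n} \<union> Inr ` {..<n})"
    and h_meas[measurable]: "h \<in> borel_measurable (lborel \<Otimes>\<^sub>M lborel)"
  shows "(\<integral>\<^sup>+\<omega>. h (walk_stats n (\<lambda>i. case_sum R \<Theta> i \<omega>)) \<partial>M) = walk_expectation n f h"
proof -
  obtain m where m: "n = Suc m" using n by (cases n) auto
  let ?T = "Inl ` {..<n} \<union> Inr ` {..<n}"
  let ?V = "\<lambda>\<omega>. \<lambda>i\<in>?T. case_sum R \<Theta> i \<omega>"
  let ?G = "\<lambda>v. \<Prod>i\<in>?T. radius_angle_density f i (v i)"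
  have V_meas: "?V \<in> M \<rightarrow>\<^sub>M PiM ?T (\<lambda>_. borel)"
    using distributed_measurable[OF R_distr] distributed_measurable[OF \<Theta>_distr]
    by (intro measurable_restrict) auto
  have [measurable]: "walk_stats n \<in> PiM ?T (\<lambda>_. lborel) \<rightarrow>\<^sub>M lborel \<Otimes>\<^sub>M lborel"
    by (rule measurable_walk_stats) simp
  have [measurable]: "?G \<in> borel_measurable (PiM ?T (\<lambda>_. lborel))"
    using borel_measurable_radius_angle_density[OF f_meas] by measurable
  have "(\<integral>\<^sup>+\<omega>. h (walk_stats n (\<lambda>i. case_sum R \<Theta> i \<omega>)) \<partial>M) = (\<integral>\<^sup>+\<omega>. h (walk_stats n (?V \<omega>)) \<partial>M)"
    by (simp add: walk_stats_def)
  also have "\<dots> = (\<integral>\<^sup>+v. h (walk_stats n v) \<partial>distr M (PiM ?T (\<lambda>_. borel)) ?V)"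
    using measurable_walk_stats[of borel n] by (intro nn_integral_distr[symmetric] V_meas) measurable
  also have "\<dots> = (\<integral>\<^sup>+v. ?G v * h (walk_stats n v) \<partial>PiM ?T (\<lambda>_. lborel))"
    by (simp add: distr_radii_angles[OF M n f_meas R_nonneg R_distr \<Theta>_distr indep] nn_integral_density)
  also have "\<dots> = (\<integral>\<^sup>+x. \<integral>\<^sup>+\<xi>. \<integral>\<^sup>+r. \<integral>\<^sup>+\<phi>.
              ?G (assemble_steps m (x, \<xi>, r, \<phi>)) * h (walk_stats n (assemble_steps m (x, \<xi>, r, \<phi>)))
            \<partial>lborel \<partial>lborel \<partial>PiM {..<m} (\<lambda>_. lborel) \<partial>PiM {..<m} (\<lambda>_. lborel))"
    unfolding m by (rule nn_integral_PiM_assemble_steps) (unfold m[symmetric], measurable)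
  also have "\<dots> = walk_expectation n f h"
    unfolding walk_expectation_def m diff_Suc_1
    by (intro nn_integral_cong)
      (simp add: walk_stats_assemble_steps prod_radius_angle_density_assemble_steps[OF f_nonneg]
        nn_integral_step_expectation[OF f_meas h_meas])
  finally show ?thesis .
qed

theorem proposition1:
  fixes M :: "'a measure" and n :: nat
    and R \<Theta> :: "nat \<Rightarrow> 'a \<Rightarrow> real" and f :: "real \<Rightarrow> real"
  assumes "prob_space M"
    and "n \<ge> 2"
    and "\<And>x. 0 \<le> f x"
    and "f \<in> borel_measurable lborel"
    and "\<And>i. i < n \<Longrightarrow> \<forall>\<omega>\<in>space M. 0 \<le> R i \<omega>"
    and "\<And>i. i < n \<Longrightarrow> distributed M lborel (R i) (\<lambda>x. ennreal (f x))"
    and "\<And>i. i < n \<Longrightarrow> distributed M lborel (\<Theta> i)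
            (\<lambda>x. ennreal (indicator {0..<2*pi} x / (2*pi)))"
    and "prob_space.indep_vars M (\<lambda>_. borel) (case_sum R \<Theta>) (Inl ` {..<n} \<union> Inr ` {..<n})"
  shows "distributed M lborel
           (\<lambda>\<omega>. ((\<Sum>i<n. R i \<omega>),
                  sqrt ((\<Sum>i<n. R i \<omega> * cos (\<Theta> i \<omega>))\<^sup>2 + (\<Sum>i<n. R i \<omega> * sin (\<Theta> i \<omega>))\<^sup>2)))
           (joint_density f n)"
proof -
  note prob = assms(1) and n = assms(2) and f_nonneg = assms(3) and marginals = assms(5-8)
  have f_meas: "f \<in> borel_measurable borel" using assms(4) by simp
  have "(\<lambda>\<omega>. walk_stats n (\<lambda>i. case_sum R \<Theta> i \<omega>)) \<in> M \<rightarrow>\<^sub>M lborel"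
    using measurable_walk_stats_radii_angles[of n R M \<Theta>] distributed_measurable[OF assms(6)]
      distributed_measurable[OF assms(7)]
    by (simp add: lborel_prod)
  moreover have "joint_density f n \<in> borel_measurable lborel"
    using borel_measurable_joint_density[OF f_meas] by (simp add: lborel_prod)
  ultimately have "distributed M lborel (\<lambda>\<omega>. walk_stats n (\<lambda>i. case_sum R \<Theta> i \<omega>)) (joint_density f n)"
  proof (rule distributedI_nn_integral_indicator)
    fix B :: "(real \<times> real) set" assume "B \<in> sets lborel"
    then have [measurable]: "indicator B \<in> borel_measurable (lborel \<Otimes>\<^sub>M lborel :: (real \<times> real) measure)"
      by (simp add: lborel_prod)
    have "(\<integral>\<^sup>+\<omega>. indicator B (walk_stats n (\<lambda>i. case_sum R \<Theta> i \<omega>)) \<partial>M) = walk_expectation n f (indicator B)"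
      using n by (intro nn_integral_walk_stats[OF prob _ f_nonneg f_meas marginals]) simp_all
    also have "\<dots> = (\<integral>\<^sup>+p. joint_density f n p * indicator B p \<partial>(lborel \<Otimes>\<^sub>M lborel))"
      by (rule nn_integral_joint_density[OF n f_nonneg f_meas, symmetric]) measurable
    finally show "(\<integral>\<^sup>+\<omega>. indicator B (walk_stats n (\<lambda>i. case_sum R \<Theta> i \<omega>)) \<partial>M)
        = (\<integral>\<^sup>+p. joint_density f n p * indicator B p \<partial>lborel)"
      by (simp add: lborel_prod)
  qed
  then show ?thesis by (simp add: walk_stats_def)
qed

end
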